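(* Let $(G,L)$ be an instance of the List-$k$-Coloring Problem such that $|L(v)|\neq 1$ for every $v\in V(G)$ and $G$ has no $L$-good $P_3$. If $G$ admits a frugal $L$-coloring $\phi$, then for every vertex $v\in V(G)$, the vertices of $N_{G^L}[v]$ receive pairwise distinct colors under $\phi$; in particular $|N_{G^L}(v)|<k$.
   Context: Graphs are finite and simple; $[k]=\{1,\dots,k\}$. A $k$-list-assignment of $G$ is a map $L:V(G)\to 2^{[k]}$; an instance of the List-$k$-Coloring Problem is a pair $(G,L)$. An $L$-coloring of $G$ is a map $\phi:V(G)\to[k]$ with $\phi(u)\ne\phi(v)$ for every edge $uv$ and $\phi(v)\in L(v)$ for all $v$. An $L$-coloring $\phi$ is frugal if for every $v\in V(G)$ and every $i\in L(v)$, $v$ has at most one neighbour $u$ with $\phi(u)=i$. An induced $P_3$ in $G$, written $x_1-x_2-x_3$, consists of distinct vertices with $x_1x_2,x_2x_3\in E(G)$ and $x_1x_3\notin E(G)$; it is $L$-good if $|L(x_1)|,|L(x_2)|,|L(x_3)|\ge 2$ and $L(x_1)\cap L(x_2)$, $L(x_1)\cap L(x_3)$, $L(x_2)\cap L(x_3)$ are all nonempty. $G^L$ is the graph with vertex set $V(G)$ whose edges are the edges $uv\in E(G)$ with $L(u)\cap L(v)\neq\emptyset$. $N_{G^L}(v)$ is the set of neighbours of $v$ in $G^L$ and $N_{G^L}[v]=N_{G^L}(v)\cup\{v\}$. *)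

theory Defs
  imports Main
begin

definition simple_graph :: "'a set \<Rightarrow> 'a set set \<Rightarrow> bool" where
  "simple_graph V E \<longleftrightarrow> finite V \<and>
     (\<forall>e\<in>E. \<exists>u v. e = {u, v} \<and> u \<noteq> v \<and> u \<in> V \<and> v \<in> V)"

definition list_assignment :: "nat \<Rightarrow> 'a set \<Rightarrow> ('a \<Rightarrow> nat set) \<Rightarrow> bool" where
  "list_assignment k V L \<longleftrightarrow> (\<forall>v\<in>V. L v \<subseteq> {1..k})"

definition L_coloring :: "'a set \<Rightarrow> 'a set set \<Rightarrow> ('a \<Rightarrow> nat set) \<Rightarrow> ('a \<Rightarrow> nat) \<Rightarrow> bool" where
  "L_coloring V E L \<phi> \<longleftrightarrow> (\<forall>v\<in>V. \<phi> v \<in> L v) \<and> (\<forall>u v. {u, v} \<in> E \<longrightarrow> \<phi> u \<noteq> \<phi> v)"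

definition frugal_L_coloring :: "'a set \<Rightarrow> 'a set set \<Rightarrow> ('a \<Rightarrow> nat set) \<Rightarrow> ('a \<Rightarrow> nat) \<Rightarrow> bool" where
  "frugal_L_coloring V E L \<phi> \<longleftrightarrow> L_coloring V E L \<phi> \<and>
     (\<forall>v\<in>V. \<forall>i\<in>L v. card {u\<in>V. {u, v} \<in> E \<and> \<phi> u = i} \<le> 1)"

definition induced_P3 :: "'a set \<Rightarrow> 'a set set \<Rightarrow> 'a \<Rightarrow> 'a \<Rightarrow> 'a \<Rightarrow> bool" where
  "induced_P3 V E x1 x2 x3 \<longleftrightarrow> x1 \<in> V \<and> x2 \<in> V \<and> x3 \<in> V \<and>
     x1 \<noteq> x2 \<and> x2 \<noteq> x3 \<and> x1 \<noteq> x3 \<and>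
     {x1, x2} \<in> E \<and> {x2, x3} \<in> E \<and> {x1, x3} \<notin> E"

definition L_good_P3 :: "'a set \<Rightarrow> 'a set set \<Rightarrow> ('a \<Rightarrow> nat set) \<Rightarrow> 'a \<Rightarrow> 'a \<Rightarrow> 'a \<Rightarrow> bool" where
  "L_good_P3 V E L x1 x2 x3 \<longleftrightarrow> induced_P3 V E x1 x2 x3 \<and>
     card (L x1) \<ge> 2 \<and> card (L x2) \<ge> 2 \<and> card (L x3) \<ge> 2 \<and>
     L x1 \<inter> L x2 \<noteq> {} \<and> L x1 \<inter> L x3 \<noteq> {} \<and> L x2 \<inter> L x3 \<noteq> {}"

definition N_GL :: "'a set \<Rightarrow> 'a set set \<Rightarrow> ('a \<Rightarrow> nat set) \<Rightarrow> 'a \<Rightarrow> 'a set" where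
  "N_GL V E L v = {u\<in>V. {u, v} \<in> E \<and> L u \<inter> L v \<noteq> {}}"

definition N_GL_closed :: "'a set \<Rightarrow> 'a set set \<Rightarrow> ('a \<Rightarrow> nat set) \<Rightarrow> 'a \<Rightarrow> 'a set" where
  "N_GL_closed V E L v = insert v (N_GL V E L v)"

end

theory Submission
  imports Defs
begin

text \<open>Suppose two vertices of \<open>N\<^sub>G\<^sub>L[v]\<close> share a colour. If one of them is \<open>v\<close>, properness is
  violated. Otherwise both are neighbours \<open>a, b\<close> of \<open>v\<close>: if the common colour lies in \<open>L(v)\<close>,
  frugality at \<open>v\<close> is violated; if not, it lies in \<open>L(a) \<inter> L(b)\<close>, properness makes \<open>a, b\<close>
  non-adjacent, and \<open>a - v - b\<close> is an \<open>L\<close>-good \<open>P\<^sub>3\<close>, because every list is nonempty (it contains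
  the colour of its vertex) and hence has at least two elements. So \<open>\<phi>\<close> maps \<open>N\<^sub>G\<^sub>L[v]\<close> injectively
  into \<open>[k]\<close>, and \<open>|N\<^sub>G\<^sub>L(v)| < |N\<^sub>G\<^sub>L[v]| \<le> k\<close>.\<close>

lemma simple_graph_edgeD:
  assumes "simple_graph V E" and "{a, b} \<in> E"
  shows "a \<noteq> b" and "a \<in> V" and "b \<in> V"
  using assms unfolding simple_graph_def
  by (metis doubleton_eq_iff)+

lemma not_in_N_GL:
  assumes "simple_graph V E"
  shows "v \<notin> N_GL V E L v"
  using simple_graph_edgeD(1)[OF assms, of v v] by (auto simp: N_GL_def)

lemma N_GL_subset: "N_GL V E L v \<subseteq> V"
  by (auto simp: N_GL_def)

lemma L_coloring_card_list_ge_2: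
  assumes "list_assignment k V L" and "L_coloring V E L \<phi>"
    and "card (L x) \<noteq> 1" and "x \<in> V"
  shows "card (L x) \<ge> 2"
proof -
  have "finite (L x)"
    using assms(1,4) by (auto simp: list_assignment_def intro: finite_subset)
  moreover have "L x \<noteq> {}"
    using assms(2,4) by (auto simp: L_coloring_def)
  ultimately show ?thesis
    using assms(3) by (cases "card (L x)") auto
qed

lemma frugal_L_coloring_same_colour_neighbours:
  assumes "frugal_L_coloring V E L \<phi>" and "finite V" and "v \<in> V"
    and "a \<in> V" "{a, v} \<in> E" and "b \<in> V" "{b, v} \<in> E"
    and "\<phi> a = \<phi> b" and "\<phi> a \<in> L v"
  shows "a = b"
proof -
  let ?S = "{u\<in>V. {u, v} \<in> E \<and> \<phi> u = \<phi> a}"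
  have "card ?S \<le> 1"
    using assms(1,3,9) by (auto simp: frugal_L_coloring_def)
  moreover have "{a, b} \<subseteq> ?S"
    using assms(4-8) by simp
  moreover have "finite ?S"
    using assms(2) by simp
  ultimately have "card {a, b} \<le> 1"
    by (meson card_mono order_trans)
  then show ?thesis
    by (cases "a = b") auto
qed

lemma L_good_P3_if_same_colour_outside_list:
  assumes "L_coloring V E L \<phi>" and "v \<in> V"
    and "a \<in> N_GL V E L v" "b \<in> N_GL V E L v" and "a \<noteq> b"
    and "\<phi> a = \<phi> b" and "\<phi> a \<notin> L v"
    and lists_ge_2: "\<And>x. x \<in> V \<Longrightarrow> card (L x) \<ge> 2"
  shows "L_good_P3 V E L a v b"
proof -
  have a: "a \<in> V" "{a, v} \<in> E" "L a \<inter> L v \<noteq> {}"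
    and b: "b \<in> V" "{v, b} \<in> E" "L v \<inter> L b \<noteq> {}"
    using assms(3,4) by (auto simp: N_GL_def insert_commute)
  have "\<phi> a \<in> L a \<inter> L b" and "{a, b} \<notin> E"
    using assms(1,6) a(1) b(1) by (auto simp: L_coloring_def)
  moreover have "a \<noteq> v" "v \<noteq> b"
    using assms(1,3,4,6,7) a(1) b(1) by (auto simp: L_coloring_def)
  ultimately show ?thesis
    using a b assms(2,5) lists_ge_2 unfolding L_good_P3_def induced_P3_def by blast
qed

lemma frugal_L_coloring_inj_on_N_GL_closed:
  assumes "simple_graph V E" and "list_assignment k V L"
    and "\<forall>x\<in>V. card (L x) \<noteq> 1"
    and "\<not> (\<exists>x1 x2 x3. L_good_P3 V E L x1 x2 x3)"
    and frugal: "frugal_L_coloring V E L \<phi>" and "v \<in> V"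
  shows "inj_on \<phi> (N_GL_closed V E L v)"
proof (rule inj_onI, rule ccontr)
  fix a b
  assume a: "a \<in> N_GL_closed V E L v" and b: "b \<in> N_GL_closed V E L v"
    and same: "\<phi> a = \<phi> b" and "a \<noteq> b"
  have col: "L_coloring V E L \<phi>"
    using frugal by (simp add: frugal_L_coloring_def)
  then have proper: "\<phi> x \<noteq> \<phi> y" if "{x, y} \<in> E" for x y
    using that by (simp add: L_coloring_def)
  consider "a = v" | "b = v" | "a \<in> N_GL V E L v" "b \<in> N_GL V E L v"
    using a b by (auto simp: N_GL_closed_def)
  then show False
  proof cases
    case 1
    with b \<open>a \<noteq> b\<close> have "{b, v} \<in> E"
      by (simp add: N_GL_closed_def N_GL_def)
    with 1 same show False
      using proper by metis
  next
    case 2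
    with a \<open>a \<noteq> b\<close> have "{a, v} \<in> E"
      by (simp add: N_GL_closed_def N_GL_def)
    with 2 same show False
      using proper by metis
  next
    case 3
    show False
    proof (cases "\<phi> a \<in> L v")
      case True
      have "finite V"
        using assms(1) by (simp add: simple_graph_def)
      with 3 True show False
        using frugal_L_coloring_same_colour_neighbours[OF frugal _ \<open>v \<in> V\<close>] same \<open>a \<noteq> b\<close>
        by (auto simp: N_GL_def)
    next
      case False
      have "L_good_P3 V E L a v b"
        using L_good_P3_if_same_colour_outside_list[OF col \<open>v \<in> V\<close> 3 \<open>a \<noteq> b\<close> same False]
          L_coloring_card_list_ge_2[OF assms(2) col] assms(3) by blast
      with assms(4) show False
        by blast
    qed
  qed
qed

lemma card_N_GL_less_if_inj_on:
  assumes "simple_graph V E" and "list_assignment k V L" and "L_coloring V E L \<phi>"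
    and "v \<in> V" and inj: "inj_on \<phi> (N_GL_closed V E L v)"
  shows "card (N_GL V E L v) < k"
proof -
  have "N_GL_closed V E L v \<subseteq> V"
    using assms(4) N_GL_subset by (simp add: N_GL_closed_def)
  moreover have "\<phi> x \<in> {1..k}" if "x \<in> V" for x
    using assms(2,3) that unfolding list_assignment_def L_coloring_def by blast
  ultimately have "\<phi> ` N_GL_closed V E L v \<subseteq> {1..k}"
    by blast
  then have "card (\<phi> ` N_GL_closed V E L v) \<le> k"
    using card_mono[of "{1..k}"] by fastforce
  then have "card (N_GL_closed V E L v) \<le> k"
    by (simp add: card_image[OF inj])
  moreover have "finite (N_GL V E L v)"
    using assms(1) N_GL_subset by (meson simple_graph_def finite_subset)
  ultimately show ?thesis
    using not_in_N_GL[OF assms(1)] by (simp add: N_GL_closed_def)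
qed

theorem lemma4p1:
  fixes V :: "'a set" and E :: "'a set set" and L :: "'a \<Rightarrow> nat set"
    and k :: nat and \<phi> :: "'a \<Rightarrow> nat"
  assumes "simple_graph V E"
    and "list_assignment k V L"
    and "\<forall>v\<in>V. card (L v) \<noteq> 1"
    and "\<not> (\<exists>x1 x2 x3. L_good_P3 V E L x1 x2 x3)"
    and "frugal_L_coloring V E L \<phi>"
  shows "\<forall>v\<in>V. inj_on \<phi> (N_GL_closed V E L v) \<and> card (N_GL V E L v) < k"
proof
  fix v assume "v \<in> V"
  have "inj_on \<phi> (N_GL_closed V E L v)"
    using frugal_L_coloring_inj_on_N_GL_closed[OF assms \<open>v \<in> V\<close>] .
  moreover have "L_coloring V E L \<phi>"
    using assms(5) by (simp add: frugal_L_coloring_def)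
  ultimately show "inj_on \<phi> (N_GL_closed V E L v) \<and> card (N_GL V E L v) < k"
    using card_N_GL_less_if_inj_on[OF assms(1,2) _ \<open>v \<in> V\<close>] by blast
qed

end
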